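(* Let $\Gamma=(V,E)$ be a simple graph of order $n$ and size $m$. Then the global dual alliance number of $\Gamma$ satisfies $$\gamma_{a_d}(\Gamma)\ge \left\lceil\frac{\sqrt{2m+n}}{2}\right\rceil$$ and the global strong dual alliance number of $\Gamma$ satisfies $$\gamma_{\hat{a}_d}(\Gamma)\ge \left\lceil\frac{1+\sqrt{1+8(n+m)}}{4}\right\rceil.$$
   Context: For $S\subseteq V$ and $v\in V$, $N_S(v)=\{u\in S: u\sim v\}$ and $N_{V\setminus S}(v)=\{u\in V\setminus S: u\sim v\}$. A nonempty set $S\subseteq V$ is a global dual alliance if (i) $|N_S(v)|+1\ge |N_{V\setminus S}(v)|$ for every $v\in S$ and (ii) $|N_S(v)|\ge |N_{V\setminus S}(v)|+1$ for every $v\in V\setminus S$. It is a global strong dual alliance if (i') $|N_S(v)|\ge |N_{V\setminus S}(v)|$ for every $v\in S$ and (ii') $|N_S(v)|\ge |N_{V\setminus S}(v)|+2$ for every $v\in V\setminus S$. $\gamma_{a_d}(\Gamma)$ (resp. $\gamma_{\hat a_d}(\Gamma)$) is the minimum cardinality of a global dual (resp. global strong dual) alliance. *)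

theory Defs
  imports Complex_Main
begin

definition simple_graph :: "'a set \<Rightarrow> ('a \<Rightarrow> 'a \<Rightarrow> bool) \<Rightarrow> bool" where
  "simple_graph V E \<longleftrightarrow> finite V \<and> (\<forall>u v. E u v \<longrightarrow> u \<in> V \<and> v \<in> V)
     \<and> (\<forall>u v. E u v \<longrightarrow> E v u) \<and> (\<forall>v. \<not> E v v)"

definition edges :: "'a set \<Rightarrow> ('a \<Rightarrow> 'a \<Rightarrow> bool) \<Rightarrow> 'a set set" where
  "edges V E = {{u, v} | u v. u \<in> V \<and> v \<in> V \<and> E u v}"

definition nbhd :: "'a set \<Rightarrow> ('a \<Rightarrow> 'a \<Rightarrow> bool) \<Rightarrow> 'a \<Rightarrow> 'a set" where
  "nbhd S E v = {u \<in> S. E u v}"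

definition global_dual_alliance :: "'a set \<Rightarrow> ('a \<Rightarrow> 'a \<Rightarrow> bool) \<Rightarrow> 'a set \<Rightarrow> bool" where
  "global_dual_alliance V E S \<longleftrightarrow> S \<noteq> {} \<and> S \<subseteq> V
     \<and> (\<forall>v\<in>S. card (nbhd S E v) + 1 \<ge> card (nbhd (V - S) E v))
     \<and> (\<forall>v\<in>V - S. card (nbhd S E v) \<ge> card (nbhd (V - S) E v) + 1)"

definition global_strong_dual_alliance :: "'a set \<Rightarrow> ('a \<Rightarrow> 'a \<Rightarrow> bool) \<Rightarrow> 'a set \<Rightarrow> bool" where
  "global_strong_dual_alliance V E S \<longleftrightarrow> S \<noteq> {} \<and> S \<subseteq> V
     \<and> (\<forall>v\<in>S. card (nbhd S E v) \<ge> card (nbhd (V - S) E v))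
     \<and> (\<forall>v\<in>V - S. card (nbhd S E v) \<ge> card (nbhd (V - S) E v) + 2)"

definition global_dual_alliance_number :: "'a set \<Rightarrow> ('a \<Rightarrow> 'a \<Rightarrow> bool) \<Rightarrow> nat" where
  "global_dual_alliance_number V E = Min (card ` {S. global_dual_alliance V E S})"

definition global_strong_dual_alliance_number :: "'a set \<Rightarrow> ('a \<Rightarrow> 'a \<Rightarrow> bool) \<Rightarrow> nat" where
  "global_strong_dual_alliance_number V E = Min (card ` {S. global_strong_dual_alliance V E S})"

end

theory Submission
  imports Defs
begin

(* Double counting.  For S a subset of V with s = |S|, let a, b, c, d count the ordered
   adjacent pairs (u, v) in S x S, (V - S) x S, S x (V - S) and (V - S) x (V - S).  The
   handshake lemma gives 2m = a + b + c + d, symmetry gives b = c, and a <= s (s - 1).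
   If |N_(V-S)(v)| <= |N_S(v)| + k on S and |N_(V-S)(v)| + r <= |N_S(v)| off S, summing
   gives b <= a + k s and d + r (n - s) <= c, hence 2m + r n + 4s <= 4s^2 + (3k + r) s.
   Dual alliances have (k, r) = (1, 1), so 2m + n <= 4s^2; strong ones have (k, r) = (0, 2),
   so m + n + s <= 2s^2.  Solving these quadratics for s gives the two bounds. *)

lemma sum_card_nbhd_swap:
  assumes "finite A" "finite B" and sym: "\<And>u v. E u v \<Longrightarrow> E v u"
  shows "(\<Sum>v\<in>A. card (nbhd B E v)) = (\<Sum>v\<in>B. card (nbhd A E v))"
proof -
  have "card {u \<in> A. E v u} = card (nbhd A E v)" for v
    unfolding nbhd_def using sym by metis
  then show ?thesis
    unfolding nbhd_def using sum_multicount_gen[OF assms(1,2), of "\<lambda>v u. E u v"] by auto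
qed

lemma card_nbhd_eq_card_incident_edges:
  assumes g: "simple_graph V E" and v: "v \<in> V"
  shows "card (nbhd V E v) = card {e \<in> edges V E. v \<in> e}"
proof -
  have "bij_betw (\<lambda>u. {u, v}) (nbhd V E v) {e \<in> edges V E. v \<in> e}"
  proof (rule bij_betw_imageI)
    show "inj_on (\<lambda>u. {u, v}) (nbhd V E v)"
      by (auto simp: inj_on_def doubleton_eq_iff)
    show "(\<lambda>u. {u, v}) ` nbhd V E v = {e \<in> edges V E. v \<in> e}"
      using g v unfolding nbhd_def edges_def simple_graph_def by (auto simp: insert_commute)
  qed
  then show ?thesis by (rule bij_betw_same_card)
qed

lemma finite_edges:
  assumes "finite V"
  shows "finite (edges V E)"
proof -
  have "edges V E \<subseteq> (\<lambda>(u, v). {u, v}) ` (V \<times> V)"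
    unfolding edges_def by force
  moreover have "finite (V \<times> V)" using assms by simp
  ultimately show ?thesis by (rule finite_surj[rotated])
qed

lemma handshake:
  assumes g: "simple_graph V E"
  shows "(\<Sum>v\<in>V. card (nbhd V E v)) = 2 * card (edges V E)"
proof -
  have fin: "finite V" using g by (simp add: simple_graph_def)
  have "card {v \<in> V. v \<in> e} = 2" if e: "e \<in> edges V E" for e
  proof -
    obtain a b where "a \<in> V" "b \<in> V" "E a b" "e = {a, b}"
      using e unfolding edges_def by blast
    moreover have "a \<noteq> b" using \<open>E a b\<close> g by (auto simp: simple_graph_def)
    ultimately have "{v \<in> V. v \<in> e} = {a, b}" "a \<noteq> b" by auto
    then show ?thesis by simp
  qed
  then have "(\<Sum>v\<in>V. card {e \<in> edges V E. v \<in> e}) = 2 * card (edges V E)"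
    by (intro sum_multicount fin finite_edges) auto
  then show ?thesis
    using card_nbhd_eq_card_incident_edges[OF g] by simp
qed

lemma card_nbhd_split:
  assumes "finite V" "S \<subseteq> V"
  shows "card (nbhd V E v) = card (nbhd S E v) + card (nbhd (V - S) E v)"
proof -
  have "nbhd V E v = nbhd S E v \<union> nbhd (V - S) E v"
    using assms(2) unfolding nbhd_def by auto
  moreover have "finite (nbhd V E v)" using assms(1) by (simp add: nbhd_def)
  ultimately show ?thesis
    by (simp add: card_Un_disjoint nbhd_def disjoint_iff)
qed

lemma sum_card_nbhd_self_le:
  assumes "finite S" and irrefl: "\<And>v. \<not> E v v"
  shows "(\<Sum>v\<in>S. card (nbhd S E v)) + card S \<le> card S ^ 2"
proof -
  have degree_bound: "card (nbhd S E v) + 1 \<le> card S" if v: "v \<in> S" for v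
  proof -
    have "finite (nbhd S E v)" "v \<notin> nbhd S E v"
      using assms by (simp_all add: nbhd_def)
    then have "card (nbhd S E v) + 1 = card (insert v (nbhd S E v))"
      by simp
    also have "\<dots> \<le> card S"
      using assms(1) v by (intro card_mono) (auto simp: nbhd_def)
    finally show ?thesis .
  qed
  have "(\<Sum>v\<in>S. card (nbhd S E v) + 1) \<le> (\<Sum>v\<in>S. card S)"
    using degree_bound by (intro sum_mono) blast
  then show ?thesis
    by (simp only: sum.distrib) (simp add: power2_eq_square)
qed

lemma card_edges_bound_by_alliance_size:
  fixes k r :: nat
  assumes g: "simple_graph V E" and S: "S \<subseteq> V"
    and defence: "\<And>v. v \<in> S \<Longrightarrow> card (nbhd (V - S) E v) \<le> card (nbhd S E v) + k"
    and offence: "\<And>v. v \<in> V - S \<Longrightarrow> card (nbhd (V - S) E v) + r \<le> card (nbhd S E v)"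
  shows "2 * card (edges V E) + r * card V + 4 * card S
           \<le> 4 * card S ^ 2 + (3 * k + r) * card S"
proof -
  have fin: "finite V" and finS: "finite S" and sym: "\<And>u v. E u v \<Longrightarrow> E v u"
    and irrefl: "\<And>v. \<not> E v v"
    using g S finite_subset by (auto simp: simple_graph_def)
  define a where "a = (\<Sum>v\<in>S. card (nbhd S E v))"
  define b where "b = (\<Sum>v\<in>S. card (nbhd (V - S) E v))"
  define c where "c = (\<Sum>v\<in>V - S. card (nbhd S E v))"
  define d where "d = (\<Sum>v\<in>V - S. card (nbhd (V - S) E v))"
  have "2 * card (edges V E) = (\<Sum>v\<in>S. card (nbhd V E v)) + (\<Sum>v\<in>V - S. card (nbhd V E v))"
    using handshake[OF g] sum.subset_diff[OF S fin] by (metis add.commute)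
  also have "\<dots> = a + b + c + d"
    by (simp add: card_nbhd_split[OF fin S] sum.distrib a_def b_def c_def d_def)
  finally have handshake_split: "2 * card (edges V E) = a + b + c + d" .
  have "b = c"
    unfolding b_def c_def by (rule sum_card_nbhd_swap) (use fin finS sym in auto)
  have defence_sum: "b \<le> a + k * card S"
    using sum_mono[of S "\<lambda>v. card (nbhd (V - S) E v)" "\<lambda>v. card (nbhd S E v) + k"] defence
    unfolding a_def b_def sum.distrib by (simp add: mult.commute)
  have offence_sum: "d + r * card (V - S) \<le> c"
    using sum_mono[of "V - S" "\<lambda>v. card (nbhd (V - S) E v) + r" "\<lambda>v. card (nbhd S E v)"] offence
    unfolding c_def d_def sum.distrib by (simp add: mult.commute)
  have card_V: "card V = card S + card (V - S)"
    using S fin by (metis card_Diff_subset card_mono finite_subset le_add_diff_inverse)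
  have "a + card S \<le> card S ^ 2"
    unfolding a_def using sum_card_nbhd_self_le[OF finS irrefl] .
  then show ?thesis
    using handshake_split \<open>b = c\<close> defence_sum offence_sum
    unfolding card_V by (simp add: algebra_simps)
qed

lemma Min_card_attained:
  assumes "finite V" "P V" "\<And>S. P S \<Longrightarrow> S \<subseteq> V"
  obtains S where "P S" "Min (card ` {S. P S}) = card S"
proof -
  have "finite {S. P S}"
    using assms(1,3) by (metis Collect_mono Pow_def finite_Pow_iff finite_subset)
  then have "Min (card ` {S. P S}) \<in> card ` {S. P S}"
    using assms(2) by (intro Min_in) auto
  then show ?thesis using that by blast
qed

lemma global_dual_alliance_number_bound:
  assumes g: "simple_graph V E" and "V \<noteq> {}"
  shows "2 * card (edges V E) + card V \<le> 4 * global_dual_alliance_number V E ^ 2"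
proof -
  have fin: "finite V" using g by (simp add: simple_graph_def)
  have "global_dual_alliance V E V"
    using \<open>V \<noteq> {}\<close> by (simp add: global_dual_alliance_def nbhd_def)
  then obtain S where S: "global_dual_alliance V E S"
    and size_S: "global_dual_alliance_number V E = card S"
    unfolding global_dual_alliance_number_def
    by (rule Min_card_attained[OF fin]) (simp add: global_dual_alliance_def)
  have "2 * card (edges V E) + 1 * card V + 4 * card S \<le> 4 * card S ^ 2 + (3 * 1 + 1) * card S"
    using S unfolding global_dual_alliance_def
    by (intro card_edges_bound_by_alliance_size[OF g]) auto
  then show ?thesis using size_S by simp
qed

lemma global_strong_dual_alliance_number_bound:
  assumes g: "simple_graph V E" and "V \<noteq> {}"
  shows "card (edges V E) + card V + global_strong_dual_alliance_number V E
           \<le> 2 * global_strong_dual_alliance_number V E ^ 2"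
proof -
  have fin: "finite V" using g by (simp add: simple_graph_def)
  have "global_strong_dual_alliance V E V"
    using \<open>V \<noteq> {}\<close> by (simp add: global_strong_dual_alliance_def nbhd_def)
  then obtain S where S: "global_strong_dual_alliance V E S"
    and size_S: "global_strong_dual_alliance_number V E = card S"
    unfolding global_strong_dual_alliance_number_def
    by (rule Min_card_attained[OF fin]) (simp add: global_strong_dual_alliance_def)
  have "2 * card (edges V E) + 2 * card V + 4 * card S \<le> 4 * card S ^ 2 + (3 * 0 + 2) * card S"
    using S unfolding global_strong_dual_alliance_def
    by (intro card_edges_bound_by_alliance_size[OF g]) auto
  then show ?thesis using size_S by simp
qed

theorem theorem9:
  fixes V :: "'a set" and E :: "'a \<Rightarrow> 'a \<Rightarrow> bool" and n m :: nat
  assumes "simple_graph V E" and "V \<noteq> {}"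
    and "n = card V" and "m = card (edges V E)"
  shows "int (global_dual_alliance_number V E) \<ge> \<lceil>sqrt (2 * real m + real n) / 2\<rceil>
    \<and> int (global_strong_dual_alliance_number V E)
           \<ge> \<lceil>(1 + sqrt (1 + 8 * (real n + real m))) / 4\<rceil>"
proof -
  let ?d = "global_dual_alliance_number V E" and ?s = "global_strong_dual_alliance_number V E"
  have "real (2 * m + n) \<le> real (4 * ?d ^ 2)"
    using global_dual_alliance_number_bound[OF assms(1,2)] assms(3,4) by (simp only: of_nat_le_iff)
  then have dual: "sqrt (2 * real m + real n) \<le> 2 * real ?d"
    by (intro real_le_lsqrt) (simp_all add: power_mult_distrib)
  have strong: "m + n + ?s \<le> 2 * ?s ^ 2"
    using global_strong_dual_alliance_number_bound[OF assms(1,2)] assms(3,4) by simp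
  have "n \<ge> 1"
    using assms(1-3) by (simp add: simple_graph_def Suc_le_eq card_gt_0_iff)
  with strong have "real ?s \<ge> 1" by (cases ?s) auto
  moreover have "real (m + n + ?s) \<le> real (2 * ?s ^ 2)"
    using strong by (simp only: of_nat_le_iff)
  ultimately have "sqrt (1 + 8 * (real n + real m)) \<le> 4 * real ?s - 1"
    by (intro real_le_lsqrt) (simp_all add: power2_eq_square algebra_simps)
  with dual show ?thesis by (simp add: ceiling_le_iff)
qed

end
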